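(* Let $X$ be a real Hilbert space, $f,g\in\Gamma_0(X)$, $T:=\operatorname{Id}-\operatorname{P}_f+\operatorname{P}_g\operatorname{R}_f$, $v:=P_{\overline{\operatorname{ran}}(\operatorname{Id}-T)}(0)$, $D:=\operatorname{dom}\partial f-\operatorname{dom}\partial g$, $R:=\operatorname{ran}\partial f+\operatorname{ran}\partial g$. Assume $\overline{\operatorname{ran}}(\operatorname{Id}-T)=\overline{D\cap R}=\overline D\cap\overline R$ and $P_{\overline R}(0)=0$. Let $x\in X$ and $y\in\operatorname{dom}f\cap(v+\operatorname{dom}g)$. Then $0\ge\langle y-\operatorname{P}_fx,v\rangle$, $f(y)\ge f(\operatorname{P}_fx)+\langle y-\operatorname{P}_fx,\ v+\operatorname{P}_{f^*}x\rangle$, $g(y-v)\ge g(\operatorname{P}_g\operatorname{R}_fx)+\langle y-\operatorname{P}_g\operatorname{R}_fx-v,\ \operatorname{P}_fx-\operatorname{P}_g\operatorname{R}_fx-v\rangle+\langle -y+v+\operatorname{P}_g\operatorname{R}_fx,\ v+\operatorname{P}_{f^*}x\rangle$.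
   Context: $\Gamma_0(X)$ is the set of convex, lower semicontinuous, proper functions on $X$; $f^*$ is the Fenchel conjugate. $\operatorname{P}_h:=(\operatorname{Id}+\partial h)^{-1}$ is the proximal mapping (so $\operatorname{P}_{f^*}=\operatorname{Id}-\operatorname{P}_f$), $\operatorname{R}_h:=2\operatorname{P}_h-\operatorname{Id}$. $P_S$ is the projection onto a nonempty closed convex set $S$. *)

theory Defs
  imports "HOL-Analysis.Analysis"
begin

definition edom :: "('a \<Rightarrow> ereal) \<Rightarrow> 'a set" where
  "edom f = {x. f x < \<infinity>}"

definition proper_fun :: "('a \<Rightarrow> ereal) \<Rightarrow> bool" where
  "proper_fun f \<longleftrightarrow> (\<forall>x. f x \<noteq> -\<infinity>) \<and> (\<exists>x. f x < \<infinity>)"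

definition epigraph :: "('a \<Rightarrow> ereal) \<Rightarrow> ('a \<times> real) set" where
  "epigraph f = {(x, r). f x \<le> ereal r}"

text \<open>Gamma_0(X): convex (convex epigraph), lower semicontinuous (closed epigraph), proper.\<close>
definition Gamma0 :: "('a::real_normed_vector \<Rightarrow> ereal) \<Rightarrow> bool" where
  "Gamma0 f \<longleftrightarrow> convex (epigraph f) \<and> closed (epigraph f) \<and> proper_fun f"

definition subdiff :: "('a::real_inner \<Rightarrow> ereal) \<Rightarrow> 'a \<Rightarrow> 'a set" where
  "subdiff f x = {u. f x \<noteq> \<infinity> \<and> f x \<noteq> -\<infinity> \<and>
                      (\<forall>y. f x + ereal (inner u (y - x)) \<le> f y)}"

definition dom_subdiff :: "('a::real_inner \<Rightarrow> ereal) \<Rightarrow> 'a set" where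
  "dom_subdiff f = {x. subdiff f x \<noteq> {}}"

definition ran_subdiff :: "('a::real_inner \<Rightarrow> ereal) \<Rightarrow> 'a set" where
  "ran_subdiff f = (\<Union>x. subdiff f x)"

definition fconj :: "('a::real_inner \<Rightarrow> ereal) \<Rightarrow> 'a \<Rightarrow> ereal" where
  "fconj f u = (SUP x. ereal (inner u x) - f x)"

definition prox :: "('a::real_inner \<Rightarrow> ereal) \<Rightarrow> 'a \<Rightarrow> 'a" where
  "prox h x = (THE p. x - p \<in> subdiff h p)"

definition rrefl :: "('a::real_inner \<Rightarrow> ereal) \<Rightarrow> 'a \<Rightarrow> 'a" where
  "rrefl h x = 2 *\<^sub>R prox h x - x"

text \<open>Projection onto a nonempty closed convex set S (the unique nearest point).
  The library's closest_point requires heine_borel, so we define it for Hilbert spaces.\<close>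
definition proj :: "'a::real_inner set \<Rightarrow> 'a \<Rightarrow> 'a" where
  "proj S x = (THE p. p \<in> S \<and> (\<forall>q\<in>S. dist x p \<le> dist x q))"

end

theory Submission
  imports Defs
begin

text \<open>The three inequalities are subgradient inequalities of f at P_f x and of g at P_g R_f x,
  with subgradients x - P_f x = P_{f*} x and R_f x - P_g R_f x, combined with the variational
  inequality 0 \<le> <a - b - v, v> for a in dom f and b in dom g. That inequality holds because v
  is also the projection of 0 onto closure (dom f - dom g) = closure D, and this projection lies
  in closure R as soon as 0 does. Proximal points, and with them the density of dom \<partial>f in
  dom f and of ran \<partial>f in dom f*, are obtained by minimising h + \<mu>/2 |. - x|^2 along a
  minimising sequence, which is Cauchy by strong convexity.\<close>

lemma Gamma0_finite:
  assumes "Gamma0 h" "x \<in> edom h"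
  obtains r where "h x = ereal r"
  using assms by (cases "h x") (auto simp: Gamma0_def proper_fun_def edom_def)

lemma Gamma0_convexD:
  fixes h :: "'a::real_normed_vector \<Rightarrow> ereal"
  assumes "Gamma0 h" "h a = ereal ra" "h b = ereal rb" "0 \<le> t" "t \<le> 1"
  shows "h ((1 - t) *\<^sub>R a + t *\<^sub>R b) \<le> ereal ((1 - t) * ra + t * rb)"
proof -
  have "(a, ra) \<in> epigraph h" "(b, rb) \<in> epigraph h"
    using assms(2,3) by (simp_all add: epigraph_def)
  moreover have "convex (epigraph h)"
    using assms(1) by (simp add: Gamma0_def)
  ultimately have "(1 - t) *\<^sub>R (a, ra) + t *\<^sub>R (b, rb) \<in> epigraph h"
    using assms(4,5) by (intro convexD) auto
  then show ?thesis
    by (simp add: epigraph_def)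
qed

lemma edom_convex:
  fixes h :: "'a::real_normed_vector \<Rightarrow> ereal"
  assumes "Gamma0 h"
  shows "convex (edom h)"
  unfolding convex_alt
proof (intro ballI allI impI)
  fix a b and t :: real
  assume "a \<in> edom h" "b \<in> edom h" "0 \<le> t \<and> t \<le> 1"
  moreover from this obtain ra rb where "h a = ereal ra" "h b = ereal rb"
    using Gamma0_finite[OF assms] by metis
  ultimately have "h ((1 - t) *\<^sub>R a + t *\<^sub>R b) \<le> ereal ((1 - t) * ra + t * rb)"
    using Gamma0_convexD[OF assms] by simp
  then show "(1 - t) *\<^sub>R a + t *\<^sub>R b \<in> edom h"
    by (auto simp: edom_def intro: le_less_trans)
qed

lemma Gamma0_closed_sublevel:
  fixes h :: "'a::real_normed_vector \<Rightarrow> ereal"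
  assumes "Gamma0 h"
  shows "closed {z. h z \<le> ereal r}"
proof -
  have "{z. h z \<le> ereal r} = (\<lambda>z. (z, r)) -` epigraph h"
    by (auto simp: epigraph_def)
  moreover have "closed ((\<lambda>z. (z, r)) -` epigraph h)"
    using assms by (intro continuous_closed_vimage continuous_intros) (simp_all add: Gamma0_def)
  ultimately show ?thesis
    by simp
qed

lemma Gamma0_lower_bound_from_ball:
  fixes h :: "'a::real_normed_vector \<Rightarrow> ereal"
  assumes G: "Gamma0 h" and hx0: "h x0 = ereal a" and \<delta>: "\<delta> > 0" and c: "c < a"
    and ball: "\<And>z. norm (z - x0) \<le> \<delta> \<Longrightarrow> ereal c < h z"
  shows "ereal (a - (a - c) * (1 + norm (z - x0) / \<delta>)) \<le> h z"
proof (cases "z \<in> edom h")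
  case False
  then show ?thesis by (simp add: edom_def)
next
  case True
  then obtain b where hz: "h z = ereal b"
    using Gamma0_finite[OF G] by blast
  define n where "n = norm (z - x0)"
  have "c < b + (a - c) * (n / \<delta>)"
  proof (cases "n \<le> \<delta>")
    case True
    then have "c < b"
      using ball hz by (force simp: n_def)
    moreover have "0 \<le> (a - c) * (n / \<delta>)"
      using c \<delta> by (simp add: n_def)
    ultimately show ?thesis by linarith
  next
    case False
    define s where "s = \<delta> / n"
    have s: "0 < s" "s \<le> 1" "s * n = \<delta>"
      using False \<delta> by (auto simp: s_def)
    have "norm (((1 - s) *\<^sub>R x0 + s *\<^sub>R z) - x0) = s * n"
      using s by (simp add: n_def algebra_simps flip: scaleR_diff_right)
    then have "ereal c < h ((1 - s) *\<^sub>R x0 + s *\<^sub>R z)"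
      using ball s by simp
    also have "\<dots> \<le> ereal ((1 - s) * a + s * b)"
      using Gamma0_convexD[OF G hx0 hz] s by simp
    finally have "c - a < s * (b - a)"
      by (simp add: algebra_simps)
    then have "(c - a) / s < b - a"
      using s by (simp add: field_simps)
    moreover have "(c - a) / s = (c - a) * (n / \<delta>)"
      using s by (simp add: s_def)
    ultimately show ?thesis
      using c unfolding left_diff_distrib by linarith
  qed
  then show ?thesis
    using hz c by (simp add: n_def algebra_simps)
qed

lemma Gamma0_norm_minorant:
  fixes h :: "'a::real_normed_vector \<Rightarrow> ereal"
  assumes G: "Gamma0 h"
  obtains A B where "B \<ge> 0" "\<And>z. ereal (A - B * norm z) \<le> h z"
proof -
  obtain x0 where "x0 \<in> edom h"
    using G by (auto simp: Gamma0_def proper_fun_def edom_def)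
  then obtain a where hx0: "h x0 = ereal a"
    using Gamma0_finite[OF G] by blast
  have "open (- {z. h z \<le> ereal (a - 1)})" "x0 \<in> - {z. h z \<le> ereal (a - 1)}"
    using Gamma0_closed_sublevel[OF G] hx0 by auto
  then obtain \<delta> where \<delta>: "\<delta> > 0" "ball x0 \<delta> \<subseteq> - {z. h z \<le> ereal (a - 1)}"
    using open_contains_ball by blast
  define r where "r = \<delta> / 2"
  have r: "r > 0"
    using \<delta> by (simp add: r_def)
  have near: "ereal (a - 1) < h z" if "norm (z - x0) \<le> r" for z
    using \<delta> that by (auto simp: r_def subset_eq not_le dist_norm norm_minus_commute)
  have "ereal (a - 1 - norm x0 / r - 1 / r * norm z) \<le> h z" for z
  proof -
    have "norm (z - x0) / r \<le> (norm z + norm x0) / r"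
      using r norm_triangle_ineq4[of z x0] by (intro divide_right_mono) auto
    then have "ereal (a - 1 - norm x0 / r - 1 / r * norm z)
        \<le> ereal (a - (a - (a - 1)) * (1 + norm (z - x0) / r))"
      by (simp add: add_divide_distrib)
    also have "\<dots> \<le> h z"
      using r near by (intro Gamma0_lower_bound_from_ball[OF G hx0]) auto
    finally show ?thesis .
  qed
  moreover have "1 / r \<ge> 0"
    using r by simp
  ultimately show ?thesis
    using that by blast
qed

lemma power2_norm_diff:
  fixes a b :: "'a::real_inner"
  shows "(norm (a - b))\<^sup>2 = (norm a)\<^sup>2 - 2 * inner a b + (norm b)\<^sup>2"
  by (simp only: power2_norm_eq_inner) (simp add: inner_diff_left inner_diff_right inner_commute)

text \<open>Only meaningful on edom h, since real_of_ereal maps \<infinity> to 0.\<close>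
definition prox_objective :: "('a::real_normed_vector \<Rightarrow> ereal) \<Rightarrow> real \<Rightarrow> 'a \<Rightarrow> 'a \<Rightarrow> real" where
  "prox_objective h \<mu> x z = real_of_ereal (h z) + \<mu> / 2 * (norm (z - x))\<^sup>2"

lemma Gamma0_prox_objective_bdd_below:
  fixes h :: "'a::real_normed_vector \<Rightarrow> ereal"
  assumes G: "Gamma0 h" and \<mu>: "\<mu> > 0"
  shows "bdd_below (prox_objective h \<mu> x ` edom h)"
proof -
  obtain A B where B: "B \<ge> 0" and AB: "\<And>z. ereal (A - B * norm z) \<le> h z"
    using Gamma0_norm_minorant[OF G] by blast
  have "A - B * norm x - B\<^sup>2 / (2 * \<mu>) \<le> prox_objective h \<mu> x z" if z: "z \<in> edom h" for z
  proof -
    define t where "t = norm (z - x)"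
    obtain r where "h z = ereal r"
      using Gamma0_finite[OF G z] .
    then have "A - B * norm z \<le> real_of_ereal (h z)"
      using AB[of z] by simp
    moreover have "B * norm z \<le> B * norm x + B * t"
      using B norm_triangle_sub[of z x] unfolding t_def by (metis distrib_left mult_left_mono)
    moreover have "- B\<^sup>2 / (2 * \<mu>) \<le> - B * t + \<mu> / 2 * t\<^sup>2"
      using \<mu> sum_power2_ge_zero[of "\<mu> * t - B" 0] by (simp add: field_simps power2_eq_square)
    ultimately show ?thesis
      unfolding prox_objective_def t_def by linarith
  qed
  then show ?thesis
    by (intro bdd_belowI2)
qed

lemma Gamma0_prox_objective_midpoint:
  fixes h :: "'a::real_inner \<Rightarrow> ereal"
  assumes G: "Gamma0 h" and a: "a \<in> edom h" and b: "b \<in> edom h"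
  shows "midpoint a b \<in> edom h"
    and "prox_objective h \<mu> x (midpoint a b) + \<mu> / 8 * (norm (a - b))\<^sup>2
      \<le> (prox_objective h \<mu> x a + prox_objective h \<mu> x b) / 2"
proof -
  define c where "c = midpoint a b"
  obtain ra rb where ra: "h a = ereal ra" and rb: "h b = ereal rb"
    using Gamma0_finite[OF G] a b by metis
  have hc: "h c \<le> ereal ((1 - 1 / 2) * ra + (1 / 2) * rb)"
    using Gamma0_convexD[OF G ra rb, of "1 / 2"] by (simp add: c_def midpoint_def scaleR_add_right)
  then show c: "midpoint a b \<in> edom h"
    by (auto simp: c_def edom_def intro: le_less_trans)
  obtain rc where "h c = ereal rc"
    using Gamma0_finite[OF G c] by (auto simp: c_def)
  then have "real_of_ereal (h c) \<le> (real_of_ereal (h a) + real_of_ereal (h b)) / 2"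
    using hc ra rb by simp
  moreover have "\<mu> / 2 * (norm (c - x))\<^sup>2 + \<mu> / 8 * (norm (a - b))\<^sup>2
      = (\<mu> / 2 * (norm (a - x))\<^sup>2 + \<mu> / 2 * (norm (b - x))\<^sup>2) / 2"
    unfolding c_def midpoint_def power2_norm_eq_inner
    by (simp add: inner_add_left inner_add_right inner_diff_left inner_diff_right inner_commute
        algebra_simps) (simp add: field_simps)
  ultimately show "prox_objective h \<mu> x (midpoint a b) + \<mu> / 8 * (norm (a - b))\<^sup>2
      \<le> (prox_objective h \<mu> x a + prox_objective h \<mu> x b) / 2"
    unfolding prox_objective_def c_def by simp
qed

lemma minimizing_sequence_Cauchy:
  fixes F :: "'a::real_normed_vector \<Rightarrow> real"
  assumes mid: "\<And>a b. a \<in> S \<Longrightarrow> b \<in> S \<Longrightarrow> m + \<kappa> * (norm (a - b))\<^sup>2 \<le> (F a + F b) / 2"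
    and \<kappa>: "\<kappa> > 0" and zs: "\<And>n. zs n \<in> S" and lim: "(\<lambda>n. F (zs n)) \<longlonglongrightarrow> m"
  shows "Cauchy zs"
proof (rule CauchyI)
  fix e :: real
  assume e: "e > 0"
  then obtain M where M: "\<And>n. n \<ge> M \<Longrightarrow> norm (F (zs n) - m) < \<kappa> * e\<^sup>2"
    using LIMSEQ_D[OF lim, of "\<kappa> * e\<^sup>2"] \<kappa> by auto
  have "norm (zs i - zs j) < e" if "i \<ge> M" "j \<ge> M" for i j
  proof -
    have "m + \<kappa> * (norm (zs i - zs j))\<^sup>2 < m + \<kappa> * e\<^sup>2"
      using mid[OF zs zs, of i j] M[OF that(1)] M[OF that(2)] by auto
    then have "(norm (zs i - zs j))\<^sup>2 < e\<^sup>2"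
      using \<kappa> by simp
    then show ?thesis
      using e by (simp add: power_less_imp_less_base)
  qed
  then show "\<exists>M. \<forall>i\<ge>M. \<forall>j\<ge>M. norm (zs i - zs j) < e"
    by blast
qed

lemma Gamma0_prox_objective_minimizer:
  fixes h :: "'a::{real_inner, complete_space} \<Rightarrow> ereal"
  assumes G: "Gamma0 h" and \<mu>: "\<mu> > 0"
  obtains p where "p \<in> edom h" "\<And>z. z \<in> edom h \<Longrightarrow> prox_objective h \<mu> x p \<le> prox_objective h \<mu> x z"
proof -
  let ?F = "prox_objective h \<mu> x"
  define m where "m = Inf (?F ` edom h)"
  have ne: "edom h \<noteq> {}"
    using G by (auto simp: Gamma0_def proper_fun_def edom_def)
  have bdd: "bdd_below (?F ` edom h)"
    using Gamma0_prox_objective_bdd_below[OF G \<mu>] .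
  have m_le: "m \<le> ?F z" if "z \<in> edom h" for z
    using bdd that unfolding m_def by (auto intro: cInf_lower)
  have "m \<in> closure (?F ` edom h)"
    unfolding m_def using ne bdd by (intro closure_contains_Inf) auto
  then obtain ms where ms_in: "\<And>n. ms n \<in> ?F ` edom h" and ms: "ms \<longlonglongrightarrow> m"
    unfolding closure_sequential by blast
  have "\<forall>n. \<exists>z. z \<in> edom h \<and> ms n = ?F z"
    using ms_in by (simp add: image_iff Bex_def)
  then obtain zs where zs_ms: "\<forall>n. zs n \<in> edom h \<and> ms n = ?F (zs n)"
    by (rule choice[THEN exE])
  then have zs: "\<And>n. zs n \<in> edom h"
    by simp
  have "ms = (\<lambda>n. ?F (zs n))"
    using zs_ms by (simp add: fun_eq_iff)
  with ms have lim: "(\<lambda>n. ?F (zs n)) \<longlonglongrightarrow> m"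
    by simp
  have "m + \<mu> / 8 * (norm (a - b))\<^sup>2 \<le> (?F a + ?F b) / 2" if "a \<in> edom h" "b \<in> edom h" for a b
    using Gamma0_prox_objective_midpoint(2)[OF G that, of \<mu> x]
      m_le[OF Gamma0_prox_objective_midpoint(1)[OF G that]]
    by linarith
  then have "Cauchy zs"
    using \<mu> by (intro minimizing_sequence_Cauchy[where \<kappa> = "\<mu> / 8", OF _ _ zs lim]) auto
  then obtain p where p: "zs \<longlonglongrightarrow> p"
    using Cauchy_convergent_iff convergent_def by blast
  have "closed (epigraph h)"
    using G by (simp add: Gamma0_def)
  moreover have "(zs n, ?F (zs n) - \<mu> / 2 * (norm (zs n - x))\<^sup>2) \<in> epigraph h" for n
  proof -
    obtain r where "h (zs n) = ereal r"
      using Gamma0_finite[OF G zs] .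
    then show ?thesis
      by (simp add: epigraph_def prox_objective_def)
  qed
  moreover have "(\<lambda>n. (zs n, ?F (zs n) - \<mu> / 2 * (norm (zs n - x))\<^sup>2))
      \<longlonglongrightarrow> (p, m - \<mu> / 2 * (norm (p - x))\<^sup>2)"
    by (intro tendsto_Pair p tendsto_diff lim tendsto_mult tendsto_const tendsto_power tendsto_norm)
  ultimately have "(p, m - \<mu> / 2 * (norm (p - x))\<^sup>2) \<in> epigraph h"
    by (rule closed_sequentially)
  then have hp: "h p \<le> ereal (m - \<mu> / 2 * (norm (p - x))\<^sup>2)"
    by (simp add: epigraph_def)
  then have p_dom: "p \<in> edom h"
    by (auto simp: edom_def intro: le_less_trans)
  obtain rp where "h p = ereal rp"
    using Gamma0_finite[OF G p_dom] .
  then have "?F p \<le> m"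
    using hp by (simp add: prox_objective_def)
  with p_dom show ?thesis
    using m_le by (intro that) (auto intro: order_trans)
qed

lemma nonpos_if_le_vanishing:
  fixes c K :: real
  assumes "\<And>t. 0 < t \<Longrightarrow> t \<le> 1 \<Longrightarrow> c \<le> t * K"
  shows "c \<le> 0"
proof -
  have "((\<lambda>t. t * K) \<longlongrightarrow> 0 * K) (at_right 0)"
    by (intro tendsto_intros)
  moreover have "eventually (\<lambda>t. c \<le> t * K) (at_right 0)"
    unfolding eventually_at_right_field using assms by (intro exI[of _ 1]) auto
  ultimately show ?thesis
    by (simp add: tendsto_lowerbound)
qed

lemma prox_objective_minimizer_subgradient:
  fixes h :: "'a::real_inner \<Rightarrow> ereal"
  assumes G: "Gamma0 h" and p: "p \<in> edom h"
    and min: "\<And>z. z \<in> edom h \<Longrightarrow> prox_objective h \<mu> x p \<le> prox_objective h \<mu> x z"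
  shows "\<mu> *\<^sub>R (x - p) \<in> subdiff h p"
proof -
  obtain rp where rp: "h p = ereal rp"
    using Gamma0_finite[OF G p] .
  have descent: "rp + \<mu> * inner (x - p) (y - p) \<le> ry" if hy: "h y = ereal ry" for y ry
  proof -
    define c where "c = rp - ry - \<mu> * inner (p - x) (y - p)"
    have "c \<le> t * (\<mu> / 2 * (norm (y - p))\<^sup>2)" if t: "0 < t" "t \<le> 1" for t
    proof -
      define z where "z = (1 - t) *\<^sub>R p + t *\<^sub>R y"
      have hz: "h z \<le> ereal ((1 - t) * rp + t * ry)"
        using Gamma0_convexD[OF G rp hy] t by (simp add: z_def)
      then have z: "z \<in> edom h"
        by (auto simp: edom_def intro: le_less_trans)
      obtain rz where "h z = ereal rz"
        using Gamma0_finite[OF G z] .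
      then have "real_of_ereal (h z) \<le> (1 - t) * rp + t * ry"
        using hz by simp
      moreover have "rp + \<mu> / 2 * (norm (p - x))\<^sup>2 \<le> real_of_ereal (h z) + \<mu> / 2 * (norm (z - x))\<^sup>2"
        using min[OF z] rp by (simp add: prox_objective_def)
      moreover have "\<mu> / 2 * (norm (z - x))\<^sup>2 = \<mu> / 2 * (norm (p - x))\<^sup>2
          + t * (\<mu> * inner (p - x) (y - p)) + t * (t * (\<mu> / 2 * (norm (y - p))\<^sup>2))"
        unfolding z_def power2_norm_eq_inner
        by (simp add: inner_add_left inner_add_right inner_diff_left inner_diff_right inner_commute
            algebra_simps)
      ultimately have "t * c \<le> t * (t * (\<mu> / 2 * (norm (y - p))\<^sup>2))"
        unfolding c_def right_diff_distrib left_diff_distrib by linarith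
      then show ?thesis
        using t by simp
    qed
    then have "c \<le> 0"
      by (rule nonpos_if_le_vanishing)
    then show ?thesis
      by (simp add: c_def inner_diff_left inner_diff_right algebra_simps)
  qed
  then show ?thesis
    unfolding subdiff_def
  proof (intro CollectI conjI allI)
    fix y
    show "h p + ereal (inner (\<mu> *\<^sub>R (x - p)) (y - p)) \<le> h y"
      using descent rp G
      by (cases "h y") (auto simp: Gamma0_def proper_fun_def)
  qed (use rp in auto)
qed

lemma Gamma0_scaled_resolvent_exists:
  fixes h :: "'a::{real_inner, complete_space} \<Rightarrow> ereal"
  assumes "Gamma0 h" "\<mu> > 0"
  obtains p where "\<mu> *\<^sub>R (x - p) \<in> subdiff h p"
proof -
  obtain p where "p \<in> edom h" "\<And>z. z \<in> edom h \<Longrightarrow> prox_objective h \<mu> x p \<le> prox_objective h \<mu> x z"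
    using Gamma0_prox_objective_minimizer[OF assms, where x = x] by blast
  then show ?thesis
    by (rule that[OF prox_objective_minimizer_subgradient[OF assms(1)]])
qed

lemma subdiff_finite:
  assumes "u \<in> subdiff h a"
  obtains r where "h a = ereal r"
  using assms by (cases "h a") (auto simp: subdiff_def)

lemma dom_subdiff_subset_edom: "dom_subdiff h \<subseteq> edom h"
  by (auto simp: dom_subdiff_def edom_def subdiff_def less_top)

lemma subdiff_monotone:
  assumes "u \<in> subdiff h a" "w \<in> subdiff h b"
  shows "0 \<le> inner (u - w) (a - b)"
proof -
  obtain ra rb where ra: "h a = ereal ra" and rb: "h b = ereal rb"
    using assms[THEN subdiff_finite] by metis
  have "h a + ereal (inner u (b - a)) \<le> h b" "h b + ereal (inner w (a - b)) \<le> h a"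
    using assms by (auto simp: subdiff_def)
  then have "ra + inner u (b - a) \<le> rb" "rb + inner w (a - b) \<le> ra"
    using ra rb by simp_all
  then show ?thesis
    by (simp add: inner_diff_left inner_diff_right)
qed

lemma prox_eqI:
  assumes "x - p \<in> subdiff h p"
  shows "prox h x = p"
  unfolding prox_def
proof (rule the_equality)
  fix q
  assume "x - q \<in> subdiff h q"
  from subdiff_monotone[OF this assms] have "inner (q - p) (q - p) \<le> 0"
    by (simp add: inner_diff_left inner_diff_right inner_commute)
  then have "inner (q - p) (q - p) = 0"
    using inner_ge_zero[of "q - p"] by linarith
  then show "q = p"
    by simp
qed fact

lemma prox_in_subdiff:
  fixes h :: "'a::{real_inner, complete_space} \<Rightarrow> ereal"
  assumes "Gamma0 h"
  shows "x - prox h x \<in> subdiff h (prox h x)"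
proof -
  obtain p where "1 *\<^sub>R (x - p) \<in> subdiff h p"
    using Gamma0_scaled_resolvent_exists[OF assms, of 1] by auto
  then show ?thesis
    using prox_eqI[of x p h] by simp
qed

lemma fconj_eq_of_subdiff:
  assumes "u \<in> subdiff f p"
  shows "fconj f u = ereal (inner u p) - f p"
  unfolding fconj_def
proof (rule antisym)
  obtain rp where rp: "f p = ereal rp"
    using subdiff_finite[OF assms] .
  show "(SUP z. ereal (inner u z) - f z) \<le> ereal (inner u p) - f p"
  proof (rule SUP_least)
    fix z
    have "ereal (rp + inner u (z - p)) \<le> f z"
      using assms rp by (simp add: subdiff_def)
    then show "ereal (inner u z) - f z \<le> ereal (inner u p) - f p"
      using rp by (cases "f z") (auto simp: inner_diff_right)
  qed
qed (rule SUP_upper, simp)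

lemma prox_fconj:
  fixes f :: "'a::{real_inner, complete_space} \<Rightarrow> ereal"
  assumes "Gamma0 f"
  shows "prox (fconj f) x = x - prox f x"
proof (rule prox_eqI)
  define p where "p = prox f x"
  have u: "x - p \<in> subdiff f p"
    using prox_in_subdiff[OF assms] by (simp add: p_def)
  obtain rp where rp: "f p = ereal rp"
    using subdiff_finite[OF u] .
  have "fconj f (x - p) + ereal (inner p (w - (x - p))) \<le> fconj f w" for w
  proof -
    have "ereal (inner w p) - f p \<le> fconj f w"
      unfolding fconj_def by (rule SUP_upper) simp
    then show ?thesis
      using rp by (simp add: fconj_eq_of_subdiff[OF u] inner_diff_right inner_commute)
  qed
  then show "x - (x - prox f x) \<in> subdiff (fconj f) (x - prox f x)"
    by (simp add: subdiff_def fconj_eq_of_subdiff[OF u] rp flip: p_def)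
qed

definition ereal_indicator :: "'a set \<Rightarrow> 'a \<Rightarrow> ereal" where
  "ereal_indicator C z = (if z \<in> C then 0 else \<infinity>)"

lemma Gamma0_ereal_indicator:
  fixes C :: "'a::real_normed_vector set"
  assumes "closed C" "convex C" "C \<noteq> {}"
  shows "Gamma0 (ereal_indicator C)"
proof -
  have "epigraph (ereal_indicator C) = C \<times> {0..}"
    by (auto simp: epigraph_def ereal_indicator_def split: if_splits)
  then show ?thesis
    using assms by (auto simp: Gamma0_def proper_fun_def ereal_indicator_def
        intro: convex_Times closed_Times)
qed

lemma proj_eqI:
  fixes C :: "'a::real_inner set"
  assumes p: "p \<in> C" and vi: "\<And>z. z \<in> C \<Longrightarrow> inner (z - p) (x - p) \<le> 0"
  shows "proj C x = p"
  unfolding proj_def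
proof (rule the_equality)
  have pythagoras: "(dist x p)\<^sup>2 + (norm (z - p))\<^sup>2 \<le> (dist x z)\<^sup>2" if "z \<in> C" for z
    using power2_norm_diff[of "x - p" "z - p"] vi[OF that]
    by (simp add: dist_norm inner_commute)
  show "p \<in> C \<and> (\<forall>q\<in>C. dist x p \<le> dist x q)"
  proof (intro conjI ballI p)
    fix q
    assume "q \<in> C"
    then have "(dist x p)\<^sup>2 \<le> (dist x q)\<^sup>2"
      using pythagoras[of q] zero_le_power2[of "norm (q - p)"] by linarith
    then show "dist x p \<le> dist x q"
      by (rule power2_le_imp_le) simp
  qed
  fix q
  assume q: "q \<in> C \<and> (\<forall>q'\<in>C. dist x q \<le> dist x q')"
  then have "(dist x q)\<^sup>2 \<le> (dist x p)\<^sup>2"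
    using p by (simp add: power_mono)
  then have "(norm (q - p))\<^sup>2 \<le> 0"
    using pythagoras[of q] q by linarith
  then show "q = p"
    by simp
qed

lemma proj_variational:
  fixes C :: "'a::{real_inner, complete_space} set"
  assumes "closed C" "convex C" "C \<noteq> {}"
  shows "proj C x \<in> C" and "\<And>z. z \<in> C \<Longrightarrow> inner (z - proj C x) (x - proj C x) \<le> 0"
proof -
  define p where "p = prox (ereal_indicator C) x"
  have sub: "x - p \<in> subdiff (ereal_indicator C) p"
    using prox_in_subdiff[OF Gamma0_ereal_indicator[OF assms]] by (simp add: p_def)
  then have p: "p \<in> C"
    by (auto simp: subdiff_def ereal_indicator_def split: if_splits)
  have ind: "ereal_indicator C p + ereal (inner (x - p) (z - p)) \<le> ereal_indicator C z" for z
    using sub by (simp add: subdiff_def)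
  have "inner (x - p) (z - p) \<le> 0" if "z \<in> C" for z
    using ind[of z] p that by (simp add: ereal_indicator_def zero_ereal_def)
  then have vi: "inner (z - p) (x - p) \<le> 0" if "z \<in> C" for z
    using that by (metis inner_commute)
  have "proj C x = p"
    using proj_eqI[OF p vi] .
  then show "proj C x \<in> C" and "\<And>z. z \<in> C \<Longrightarrow> inner (z - proj C x) (x - proj C x) \<le> 0"
    using p vi by simp_all
qed

lemma small_factor_exists:
  fixes e N :: real
  assumes "e > 0" "N \<ge> 0"
  obtains l where "0 < l" "l \<le> 1" "l * N < e"
proof
  define l where "l = min 1 (e / (N + 1))"
  show "0 < l" "l \<le> 1"
    using assms by (auto simp: l_def)
  have "l * N \<le> e / (N + 1) * N"
    using assms by (intro mult_right_mono) (auto simp: l_def)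
  also have "\<dots> < e"
    using assms by (simp add: field_simps)
  finally show "l * N < e" .
qed

lemma edom_subset_closure_dom_subdiff:
  fixes f :: "'a::{real_inner, complete_space} \<Rightarrow> ereal"
  assumes G: "Gamma0 f"
  shows "edom f \<subseteq> closure (dom_subdiff f)"
proof
  fix y
  assume "y \<in> edom f"
  then obtain ry where ry: "f y = ereal ry"
    using Gamma0_finite[OF G] by blast
  obtain A B where B: "B \<ge> 0" and AB: "\<And>z. ereal (A - B * norm z) \<le> f z"
    using Gamma0_norm_minorant[OF G] by blast
  define M where "M = ry - A + B * norm y"
  have M: "M \<ge> 0"
    using AB[of y] ry by (simp add: M_def)
  show "y \<in> closure (dom_subdiff f)"
    unfolding closure_approachable
  proof (intro allI impI)
    fix e :: real
    assume e: "e > 0"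
    obtain l where l: "0 < l" "l \<le> 1" "l * (2 * M + B\<^sup>2) < e\<^sup>2"
      using small_factor_exists[of "e\<^sup>2" "2 * M + B\<^sup>2"] e M by auto
    obtain p where sp: "(1 / l) *\<^sub>R (y - p) \<in> subdiff f p"
      using Gamma0_scaled_resolvent_exists[OF G, of "1 / l"] l by auto
    obtain rp where rp: "f p = ereal rp"
      using subdiff_finite[OF sp] .
    define d where "d = norm (y - p)"
    have "f p + ereal (inner ((1 / l) *\<^sub>R (y - p)) (y - p)) \<le> f y"
      using sp by (simp add: subdiff_def)
    then have "rp + d\<^sup>2 / l \<le> ry"
      using rp ry by (simp add: d_def power2_norm_eq_inner)
    then have "d\<^sup>2 \<le> l * (ry - rp)"
      using l by (simp add: field_simps)
    moreover have "ry - rp \<le> M + B * d"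
    proof -
      have "B * norm p \<le> B * (norm y + d)"
        using B norm_triangle_sub[of p y] unfolding d_def
        by (intro mult_left_mono) (auto simp: norm_minus_commute)
      then show ?thesis
        using AB[of p] rp by (simp add: M_def algebra_simps)
    qed
    ultimately have "d\<^sup>2 \<le> l * (M + B * d)"
      using l by (meson mult_left_mono order_trans less_imp_le)
    moreover have "2 * (l * B * d) \<le> (l * B)\<^sup>2 + d\<^sup>2"
      using zero_le_power2[of "l * B - d"] unfolding power2_diff by linarith
    moreover have "(l * B)\<^sup>2 \<le> l * B\<^sup>2"
    proof -
      have "l * (l * B\<^sup>2) \<le> 1 * (l * B\<^sup>2)"
        using l by (intro mult_right_mono) auto
      then show ?thesis
        by (simp add: power2_eq_square ac_simps)
    qed
    moreover have "l * (M + B * d) = l * M + l * B * d" "l * (2 * M + B\<^sup>2) = 2 * (l * M) + l * B\<^sup>2"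
      by (simp_all add: algebra_simps)
    ultimately have "d\<^sup>2 < e\<^sup>2"
      using l by linarith
    then have "dist p y < e"
      using e by (simp add: d_def dist_norm norm_minus_commute power_less_imp_less_base)
    moreover have "p \<in> dom_subdiff f"
      using sp by (auto simp: dom_subdiff_def)
    ultimately show "\<exists>z\<in>dom_subdiff f. dist z y < e"
      by blast
  qed
qed

lemma closure_dom_subdiff:
  fixes f :: "'a::{real_inner, complete_space} \<Rightarrow> ereal"
  assumes "Gamma0 f"
  shows "closure (dom_subdiff f) = closure (edom f)"
  using edom_subset_closure_dom_subdiff[OF assms] dom_subdiff_subset_edom
  by (metis closure_closure closure_mono subset_antisym)

text \<open>This is dom f*, the effective domain of the Fenchel conjugate.\<close>
definition minorant_slopes :: "('a::real_inner \<Rightarrow> ereal) \<Rightarrow> 'a set" where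
  "minorant_slopes f = {u. \<exists>K. \<forall>z. ereal (inner u z - K) \<le> f z}"

lemma ran_subdiff_subset_minorant_slopes: "ran_subdiff f \<subseteq> minorant_slopes f"
proof
  fix u
  assume "u \<in> ran_subdiff f"
  then obtain a where a: "u \<in> subdiff f a"
    by (auto simp: ran_subdiff_def)
  obtain ra where ra: "f a = ereal ra"
    using subdiff_finite[OF a] .
  have "ereal (inner u z - (inner u a - ra)) \<le> f z" for z
    using a ra by (simp add: subdiff_def inner_diff_right algebra_simps)
  then show "u \<in> minorant_slopes f"
    by (auto simp: minorant_slopes_def)
qed

lemma minorant_slopes_subset_closure_ran_subdiff:
  fixes f :: "'a::{real_inner, complete_space} \<Rightarrow> ereal"
  assumes G: "Gamma0 f"
  shows "minorant_slopes f \<subseteq> closure (ran_subdiff f)"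
proof
  fix u
  assume "u \<in> minorant_slopes f"
  then obtain K where K: "\<And>z. ereal (inner u z - K) \<le> f z"
    by (auto simp: minorant_slopes_def)
  obtain z0 where "z0 \<in> edom f"
    using G by (auto simp: Gamma0_def proper_fun_def edom_def)
  then obtain r0 where r0: "f z0 = ereal r0"
    using Gamma0_finite[OF G] by blast
  define M where "M = r0 - inner u z0 + K"
  have M: "M \<ge> 0"
    using K[of z0] r0 by (simp add: M_def)
  show "u \<in> closure (ran_subdiff f)"
    unfolding closure_approachable
  proof (intro allI impI)
    fix e :: real
    assume e: "e > 0"
    obtain l where l: "0 < l" "l \<le> 1" "l * (2 * M + (norm z0)\<^sup>2) < e\<^sup>2"
      using small_factor_exists[of "e\<^sup>2" "2 * M + (norm z0)\<^sup>2"] e M by auto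
    obtain p where "l *\<^sub>R ((1 / l) *\<^sub>R u - p) \<in> subdiff f p"
      using Gamma0_scaled_resolvent_exists[OF G l(1)] by blast
    moreover have "l *\<^sub>R ((1 / l) *\<^sub>R u - p) = u - l *\<^sub>R p"
      using l by (simp add: algebra_simps)
    ultimately have sp: "u - l *\<^sub>R p \<in> subdiff f p"
      by simp
    obtain rp where rp: "f p = ereal rp"
      using subdiff_finite[OF sp] .
    have "f p + ereal (inner (u - l *\<^sub>R p) (z0 - p)) \<le> f z0"
      using sp by (simp add: subdiff_def)
    then have "rp + inner (u - l *\<^sub>R p) (z0 - p) \<le> r0"
      using rp r0 by simp
    moreover have "inner u p - K \<le> rp"
      using K[of p] rp by simp
    ultimately have "l * inner p p \<le> M + l * inner p z0"
      by (simp add: M_def inner_diff_left inner_diff_right inner_commute algebra_simps)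
    moreover have "2 * (l * inner p z0) \<le> l * inner p p + l * (norm z0)\<^sup>2"
    proof -
      have "2 * inner p z0 \<le> inner p p + (norm z0)\<^sup>2"
        using inner_ge_zero[of "p - z0"]
        by (simp add: power2_norm_eq_inner inner_diff_left inner_diff_right inner_commute)
      then have "l * (2 * inner p z0) \<le> l * (inner p p + (norm z0)\<^sup>2)"
        using l by (intro mult_left_mono) auto
      then show ?thesis
        by (simp add: algebra_simps)
    qed
    moreover have "l * (norm z0)\<^sup>2 \<le> (norm z0)\<^sup>2"
      using l by (simp add: mult_left_le_one_le)
    ultimately have "l * inner p p \<le> 2 * M + (norm z0)\<^sup>2"
      by linarith
    then have "l * (l * inner p p) \<le> l * (2 * M + (norm z0)\<^sup>2)"
      using l by (simp add: mult_left_mono)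
    moreover have "(norm (l *\<^sub>R p))\<^sup>2 = l * (l * inner p p)"
      unfolding power2_norm_eq_inner by simp
    ultimately have "(norm (l *\<^sub>R p))\<^sup>2 < e\<^sup>2"
      using l by linarith
    then have "dist (u - l *\<^sub>R p) u < e"
      using e by (simp add: dist_norm power_less_imp_less_base)
    moreover have "u - l *\<^sub>R p \<in> ran_subdiff f"
      using sp by (auto simp: ran_subdiff_def)
    ultimately show "\<exists>z\<in>ran_subdiff f. dist z u < e"
      by blast
  qed
qed

lemma closure_ran_subdiff:
  fixes f :: "'a::{real_inner, complete_space} \<Rightarrow> ereal"
  assumes "Gamma0 f"
  shows "closure (ran_subdiff f) = closure (minorant_slopes f)"
  using minorant_slopes_subset_closure_ran_subdiff[OF assms] ran_subdiff_subset_minorant_slopes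
  by (metis closure_closure closure_mono subset_antisym)

lemma convex_minorant_slopes: "convex (minorant_slopes f)"
  unfolding convex_alt
proof (intro ballI allI impI)
  fix a b and t :: real
  assume "a \<in> minorant_slopes f" "b \<in> minorant_slopes f" and t: "0 \<le> t \<and> t \<le> 1"
  then obtain Ka Kb where Ka: "\<And>z. ereal (inner a z - Ka) \<le> f z" and Kb: "\<And>z. ereal (inner b z - Kb) \<le> f z"
    by (auto simp: minorant_slopes_def)
  have "ereal (inner ((1 - t) *\<^sub>R a + t *\<^sub>R b) z - ((1 - t) * Ka + t * Kb)) \<le> f z" for z
  proof -
    have "inner ((1 - t) *\<^sub>R a + t *\<^sub>R b) z - ((1 - t) * Ka + t * Kb)
        = (1 - t) * (inner a z - Ka) + t * (inner b z - Kb)"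
      by (simp add: inner_add_left algebra_simps)
    also have "\<dots> \<le> max (inner a z - Ka) (inner b z - Kb)"
      using t by (intro convex_bound_le) auto
    finally have "inner ((1 - t) *\<^sub>R a + t *\<^sub>R b) z - ((1 - t) * Ka + t * Kb)
        \<le> max (inner a z - Ka) (inner b z - Kb)" .
    moreover have "ereal (max (inner a z - Ka) (inner b z - Kb)) \<le> f z"
      using Ka[of z] Kb[of z] by (simp add: max_def)
    ultimately show ?thesis
      by (meson ereal_less_eq(3) order_trans)
  qed
  then show "(1 - t) *\<^sub>R a + t *\<^sub>R b \<in> minorant_slopes f"
    by (auto simp: minorant_slopes_def)
qed

lemma minorant_slopes_add:
  assumes u: "u \<in> minorant_slopes g" and bound: "\<And>b. b \<in> edom g \<Longrightarrow> inner v b \<le> K"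
  shows "u + v \<in> minorant_slopes g"
proof -
  obtain L where L: "\<And>z. ereal (inner u z - L) \<le> g z"
    using u by (auto simp: minorant_slopes_def)
  have "ereal (inner (u + v) z - (L + K)) \<le> g z" for z
  proof (cases "z \<in> edom g")
    case True
    then have "inner (u + v) z - (L + K) \<le> inner u z - L"
      using bound by (simp add: inner_add_left)
    then show ?thesis
      using L[of z] by (meson ereal_less_eq(3) order_trans)
  qed (simp add: edom_def)
  then show ?thesis
    by (auto simp: minorant_slopes_def)
qed

lemma closure_bounded_linear_image_Times_closure:
  fixes g :: "'a::real_normed_vector \<times> 'b::real_normed_vector \<Rightarrow> 'c::real_normed_vector"
  assumes "bounded_linear g"
  shows "closure (g ` (closure A \<times> closure B)) = closure (g ` (A \<times> B))"
proof
  show "closure (g ` (closure A \<times> closure B)) \<subseteq> closure (g ` (A \<times> B))"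
    using closure_bounded_linear_image_subset[OF assms, of "A \<times> B"]
    by (intro closure_minimal) (simp_all add: closure_Times)
  show "closure (g ` (A \<times> B)) \<subseteq> closure (g ` (closure A \<times> closure B))"
    by (intro closure_mono image_mono) (auto intro: closure_subset[THEN subsetD])
qed

lemma closure_sums_cong:
  fixes A A' B B' :: "'a::real_normed_vector set"
  assumes "closure A = closure A'" "closure B = closure B'"
  shows "closure {a + b | a b. a \<in> A \<and> b \<in> B} = closure {a + b | a b. a \<in> A' \<and> b \<in> B'}"
proof -
  have sums: "{a + b | a b. a \<in> X \<and> b \<in> Y} = (\<lambda>(a, b). a + b) ` (X \<times> Y)" for X Y :: "'a set"
    by auto
  have "bounded_linear (\<lambda>(a::'a, b). a + b)"
    using bounded_linear_add[OF bounded_linear_fst bounded_linear_snd] by (simp add: split_def)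
  from closure_bounded_linear_image_Times_closure[OF this] show ?thesis
    unfolding sums by (metis assms)
qed

lemma closure_differences_cong:
  fixes A A' B B' :: "'a::real_normed_vector set"
  assumes "closure A = closure A'" "closure B = closure B'"
  shows "closure {a - b | a b. a \<in> A \<and> b \<in> B} = closure {a - b | a b. a \<in> A' \<and> b \<in> B'}"
proof -
  have differences: "{a - b | a b. a \<in> X \<and> b \<in> Y} = (\<lambda>(a, b). a - b) ` (X \<times> Y)" for X Y :: "'a set"
    by auto
  have "bounded_linear (\<lambda>(a::'a, b). a - b)"
    using bounded_linear_sub[OF bounded_linear_fst bounded_linear_snd] by (simp add: split_def)
  from closure_bounded_linear_image_Times_closure[OF this] show ?thesis
    unfolding differences by (metis assms)
qed

text \<open>By the hypothesis on c, <c, .> is bounded above on dom g, so adding c to a slope of an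
  affine minorant of g gives another one: translation by c maps the dense subset
  dom f* + dom g* of closure R into itself.\<close>
lemma minimal_displacement_mem_closure_ran_sum:
  fixes f g :: "'a::{real_inner, complete_space} \<Rightarrow> ereal"
  assumes f: "Gamma0 f" and g: "Gamma0 g"
    and c: "\<And>a b. a \<in> edom f \<Longrightarrow> b \<in> edom g \<Longrightarrow> 0 \<le> inner (a - b - c) c"
    and R_def: "R = {a + b | a b. a \<in> ran_subdiff f \<and> b \<in> ran_subdiff g}"
    and zero: "0 \<in> closure R"
  shows "c \<in> closure R"
proof -
  define S where "S = {a + b | a b. a \<in> minorant_slopes f \<and> b \<in> minorant_slopes g}"
  have R_S: "closure R = closure S"
    unfolding R_def S_def using closure_ran_subdiff[OF f] closure_ran_subdiff[OF g]
    by (rule closure_sums_cong)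
  obtain a0 where a0: "a0 \<in> edom f"
    using f by (auto simp: Gamma0_def proper_fun_def edom_def)
  have bound: "inner c b \<le> inner a0 c - inner c c" if "b \<in> edom g" for b
    using c[OF a0 that] unfolding inner_diff_left by (simp add: inner_commute)
  have slopes_shift: "b + c \<in> minorant_slopes g" if "b \<in> minorant_slopes g" for b
    using minorant_slopes_add[OF that bound] .
  have "(+) c ` S \<subseteq> S"
  proof
    fix z
    assume "z \<in> (+) c ` S"
    then obtain a b where "z = a + (b + c)" "a \<in> minorant_slopes f" "b \<in> minorant_slopes g"
      unfolding S_def by (auto simp: ac_simps)
    then show "z \<in> S"
      unfolding S_def using slopes_shift by blast
  qed
  then have "closure ((+) c ` S) \<subseteq> closure S"
    by (rule closure_mono)
  moreover have "c \<in> (+) c ` closure S"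
    using zero R_S by (intro image_eqI[of _ _ 0]) simp_all
  ultimately show ?thesis
    unfolding R_S closure_translation[symmetric] by blast
qed

lemma convex_closure_ran_subdiff_sums:
  fixes f g :: "'a::{real_inner, complete_space} \<Rightarrow> ereal"
  assumes f: "Gamma0 f" and g: "Gamma0 g"
  shows "convex (closure {a + b | a b. a \<in> ran_subdiff f \<and> b \<in> ran_subdiff g})"
proof -
  have "{a + b | a b. a \<in> minorant_slopes f \<and> b \<in> minorant_slopes g}
      = (\<Union>a\<in>minorant_slopes f. \<Union>b\<in>minorant_slopes g. {a + b})"
    by blast
  then have "convex {a + b | a b. a \<in> minorant_slopes f \<and> b \<in> minorant_slopes g}"
    by (simp add: convex_sums convex_minorant_slopes)
  then show ?thesis
    unfolding closure_sums_cong[OF closure_ran_subdiff[OF f] closure_ran_subdiff[OF g]]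
    by (rule convex_closure)
qed

lemma proj_closure_inter_variational:
  fixes f g :: "'a::{real_inner, complete_space} \<Rightarrow> ereal" and D R :: "'a set"
  assumes f: "Gamma0 f" and g: "Gamma0 g"
    and D_def: "D = {a - b | a b. a \<in> dom_subdiff f \<and> b \<in> dom_subdiff g}"
    and R_def: "R = {a + b | a b. a \<in> ran_subdiff f \<and> b \<in> ran_subdiff g}"
    and DR: "closure (D \<inter> R) = closure D \<inter> closure R"
    and R0: "proj (closure R) 0 = 0"
    and a: "a \<in> edom f" and b: "b \<in> edom g"
  shows "0 \<le> inner (a - b - proj (closure (D \<inter> R)) 0) (proj (closure (D \<inter> R)) 0)"
proof -
  define C where "C = closure {a - b | a b. a \<in> edom f \<and> b \<in> edom g}"
  have D_C: "closure D = C"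
    unfolding D_def C_def using closure_dom_subdiff[OF f] closure_dom_subdiff[OF g]
    by (rule closure_differences_cong)
  have diff_C: "a - b \<in> C" if "a \<in> edom f" "b \<in> edom g" for a b
    unfolding C_def using that by (intro closure_subset[THEN subsetD]) blast
  have "{a - b | a b. a \<in> edom f \<and> b \<in> edom g} = (\<Union>a\<in>edom f. \<Union>b\<in>edom g. {a - b})"
    by blast
  then have "convex C"
    unfolding C_def by (simp add: convex_closure convex_differences edom_convex f g)
  moreover have "C \<noteq> {}"
    using diff_C[OF a b] by blast
  moreover have "closed C"
    by (simp add: C_def)
  ultimately have c: "proj C 0 \<in> C" "\<And>z. z \<in> C \<Longrightarrow> 0 \<le> inner (z - proj C 0) (proj C 0)"
    using proj_variational[where C = C and x = 0] by simp_all
  have "x - prox f x + (x - prox g x) \<in> R" for x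
    using prox_in_subdiff[OF f] prox_in_subdiff[OF g] unfolding R_def ran_subdiff_def by blast
  then have "closure R \<noteq> {}"
    using closure_subset[of R] by blast
  moreover have "convex (closure R)"
    unfolding R_def by (rule convex_closure_ran_subdiff_sums[OF f g])
  ultimately have "0 \<in> closure R"
    using proj_variational(1)[where C = "closure R" and x = 0] R0 by simp
  then have "proj C 0 \<in> closure R"
    using minimal_displacement_mem_closure_ran_sum[OF f g c(2)[OF diff_C] R_def] by blast
  then have "proj (closure (D \<inter> R)) 0 = proj C 0"
    using c unfolding DR D_C by (intro proj_eqI) auto
  then show ?thesis
    using c(2)[OF diff_C[OF a b]] by simp
qed

lemma subdiff_le:
  assumes "u \<in> subdiff h a" "r \<le> inner u (z - a)"
  shows "h a + ereal r \<le> h z"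
proof -
  have "h a + ereal r \<le> h a + ereal (inner u (z - a))"
    using assms(2) by (intro add_left_mono) simp
  also have "\<dots> \<le> h z"
    using assms(1) by (simp add: subdiff_def)
  finally show ?thesis .
qed

theorem lemma6p3:
  fixes f g :: "'a::{real_inner, complete_space} \<Rightarrow> ereal"
    and T :: "'a \<Rightarrow> 'a" and v x y :: 'a and D R :: "'a set"
  assumes f: "Gamma0 f" and g: "Gamma0 g"
    and T_def: "T = (\<lambda>z. z - prox f z + prox g (rrefl f z))"
    and v_def: "v = proj (closure (range (\<lambda>z. z - T z))) 0"
    and D_def: "D = {a - b | a b. a \<in> dom_subdiff f \<and> b \<in> dom_subdiff g}"
    and R_def: "R = {a + b | a b. a \<in> ran_subdiff f \<and> b \<in> ran_subdiff g}"
    and h1: "closure (range (\<lambda>z. z - T z)) = closure (D \<inter> R)"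
    and h2: "closure (D \<inter> R) = closure D \<inter> closure R"
    and h3: "proj (closure R) 0 = 0"
    and y: "y \<in> edom f \<inter> ((\<lambda>z. v + z) ` edom g)"
  shows "0 \<ge> inner (y - prox f x) v
    \<and> f y \<ge> f (prox f x) + ereal (inner (y - prox f x) (v + prox (fconj f) x))
    \<and> g (y - v) \<ge> g (prox g (rrefl f x))
           + ereal (inner (y - prox g (rrefl f x) - v) (prox f x - prox g (rrefl f x) - v))
           + ereal (inner (- y + v + prox g (rrefl f x)) (v + prox (fconj f) x))"
proof -
  define p q where "p = prox f x" and "q = prox g (rrefl f x)"
  have v: "\<And>a b. a \<in> edom f \<Longrightarrow> b \<in> edom g \<Longrightarrow> 0 \<le> inner (a - b - v) v"
    unfolding v_def h1 using proj_closure_inter_variational[OF f g D_def R_def h2 h3] .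
  have u: "x - p \<in> subdiff f p" and w: "2 *\<^sub>R p - x - q \<in> subdiff g q"
    using prox_in_subdiff[OF f] prox_in_subdiff[OF g] by (simp_all add: p_def q_def rrefl_def)
  then have "p \<in> edom f" "q \<in> edom g"
    using dom_subdiff_subset_edom by (auto simp: dom_subdiff_def)
  moreover have "y \<in> edom f" "y - v \<in> edom g"
    using y by auto
  ultimately have c1: "inner (y - p) v \<le> 0" and c2: "0 \<le> inner (y - q - v) v"
    using v[of p "y - v"] v[of y q] by (simp_all add: inner_diff_left)
  have "f p + ereal (inner (y - p) (v + (x - p))) \<le> f y"
    using c1 by (intro subdiff_le[OF u]) (simp add: inner_add_right inner_commute)
  moreover have "g q + ereal (inner (y - q - v) (p - q - v) + inner (- y + v + q) (v + (x - p)))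
      \<le> g (y - v)"
    using c2 by (intro subdiff_le[OF w])
      (simp add: inner_commute scaleR_2 algebra_simps)
  ultimately show ?thesis
    using c1 prox_fconj[OF f, of x] by (simp add: p_def q_def add.assoc)
qed

end
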